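(* Let $k\ge2$, $1\le m<k$, and alternatives $\ell=1,\dots,k$ with i.i.d. replications (independent across alternatives) whose means are pairwise distinct and ordered $\mu_{\langle 1\rangle}>\dots>\mu_{\langle k\rangle}$, satisfying Assumptions 1–4 of the context, and let $G_{ij}$ be as in the context. Consider (P1): maximize $z$ over $(z,r_{\langle1\rangle},\dots,r_{\langle k\rangle})$ subject to $G_{ij}(r_{\langle i\rangle},r_{\langle j\rangle})-z\ge0$ for all $i\in\{1,\dots,m\}$, $j\in\{m+1,\dots,k\}$, $\sum_{\ell=1}^kr_{\langle\ell\rangle}=1$, $r_{\langle\ell\rangle}\ge0$; (P2): maximize $z$ subject to $\min_{j\in\{m+1,\dots,k\}}G_{ij}(r_{\langle i\rangle},r_{\langle j\rangle})=z$ for all $i\in\{1,\dots,m\}$, $\min_{i\in\{1,\dots,m\}}G_{ij}(r_{\langle i\rangle},r_{\langle j\rangle})=z$ for all $j\in\{m+1,\dots,k\}$, $\sum_{\ell=1}^kr_{\langle\ell\rangle}=1$, $r_{\langle\ell\rangle}>0$. Then (P1) and (P2) are equivalent: $r^*=(r^*_{\langle1\rangle},\dots,r^*_{\langle k\rangle})$ is an optimal solution of (P1) if and only if it is an optimal solution of (P2).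
   Context: $G_{ij}(r_{\langle i\rangle},r_{\langle j\rangle})=\inf_{x\in\mathbb R}\big(r_{\langle i\rangle}\Lambda^*_{\langle i\rangle}(x)+r_{\langle j\rangle}\Lambda^*_{\langle j\rangle}(x)\big)$, where $\Lambda^*_\ell(x)=\sup_\lambda\{\lambda x-\Lambda_\ell(\lambda)\}$. $\bar X_\ell(n)$ is the sample mean of $n$ replications of alternative $\ell$, $\Lambda^{(n)}_\ell(\lambda)=\log\mathbb E[e^{\lambda\bar X_\ell(n)}]$. Assumption 1: $\Lambda_\ell(\lambda)=\lim_{n\to\infty}\frac1n\Lambda^{(n)}_\ell(n\lambda)$ exists as an extended real number for all $\lambda$. With $\mathcal D_{\Lambda_\ell}=\{\lambda:\Lambda_\ell(\lambda)<\infty\}$, interior $\mathcal D^o_{\Lambda_\ell}$, and $\mathcal F_\ell=\{\Lambda'_\ell(\lambda):\lambda\in\mathcal D^o_{\Lambda_\ell}\}$, interior $\mathcal F^o_\ell$: Assumption 2: $0\in\mathcal D^o_{\Lambda_\ell}$. Assumption 3: $\Lambda_\ell$ strictly convex, continuous on $\mathcal D^o_{\Lambda_\ell}$ and steep. Assumption 4: $[\mu_{\langle k\rangle},\mu_{\langle1\rangle}]\subset\bigcap_\ell\mathcal F^o_\ell$. *)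

theory Defs
  imports "HOL-Probability.Probability"
begin

text \<open>Alternatives are labelled directly by their rank: alternative l (1 <= l <= k)
  is the alternative with the l-th largest mean, i.e. l plays the role of <l>.
  X l n is the n-th replication (n = 0,1,2,...) of alternative l on the probability space M.\<close>

definition sample_mean :: "(nat \<Rightarrow> nat \<Rightarrow> 'a \<Rightarrow> real) \<Rightarrow> nat \<Rightarrow> nat \<Rightarrow> 'a \<Rightarrow> real" where
  "sample_mean X l n = (\<lambda>\<omega>. (\<Sum>i<n. X l i \<omega>) / real n)"

definition log_mgf :: "'a measure \<Rightarrow> ('a \<Rightarrow> real) \<Rightarrow> real \<Rightarrow> ereal" where
  "log_mgf M Y lam =
     (let I = (\<integral>\<^sup>+ \<omega>. ennreal (exp (lam * Y \<omega>)) \<partial>M)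
      in if I = \<infinity> then \<infinity> else ereal (ln (enn2real I)))"

definition Lambda_n :: "'a measure \<Rightarrow> (nat \<Rightarrow> nat \<Rightarrow> 'a \<Rightarrow> real) \<Rightarrow> nat \<Rightarrow> nat \<Rightarrow> real \<Rightarrow> ereal" where
  "Lambda_n M X l n lam = log_mgf M (sample_mean X l n) lam"

definition Lambda_seq :: "'a measure \<Rightarrow> (nat \<Rightarrow> nat \<Rightarrow> 'a \<Rightarrow> real) \<Rightarrow> nat \<Rightarrow> real \<Rightarrow> nat \<Rightarrow> ereal" where
  "Lambda_seq M X l lam n = ereal (1 / real n) * Lambda_n M X l n (real n * lam)"

definition Lambda :: "'a measure \<Rightarrow> (nat \<Rightarrow> nat \<Rightarrow> 'a \<Rightarrow> real) \<Rightarrow> nat \<Rightarrow> real \<Rightarrow> ereal" where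
  "Lambda M X l lam = lim (Lambda_seq M X l lam)"

definition dom_Lambda :: "'a measure \<Rightarrow> (nat \<Rightarrow> nat \<Rightarrow> 'a \<Rightarrow> real) \<Rightarrow> nat \<Rightarrow> real set" where
  "dom_Lambda M X l = {lam. Lambda M X l lam < \<infinity>}"

text \<open>Real-valued version of Lambda_l (used on the interior of D_l, where it is finite).\<close>
definition LambdaR :: "'a measure \<Rightarrow> (nat \<Rightarrow> nat \<Rightarrow> 'a \<Rightarrow> real) \<Rightarrow> nat \<Rightarrow> real \<Rightarrow> real" where
  "LambdaR M X l lam = real_of_ereal (Lambda M X l lam)"

definition F_set :: "'a measure \<Rightarrow> (nat \<Rightarrow> nat \<Rightarrow> 'a \<Rightarrow> real) \<Rightarrow> nat \<Rightarrow> real set" where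
  "F_set M X l = (\<lambda>t. deriv (LambdaR M X l) t) ` interior (dom_Lambda M X l)"

definition strictly_convex_on :: "real set \<Rightarrow> (real \<Rightarrow> real) \<Rightarrow> bool" where
  "strictly_convex_on S f \<longleftrightarrow>
     (\<forall>x\<in>S. \<forall>y\<in>S. \<forall>u::real. x \<noteq> y \<and> 0 < u \<and> u < 1 \<longrightarrow>
        f ((1 - u) * x + u * y) < (1 - u) * f x + u * f y)"

definition steep :: "real set \<Rightarrow> (real \<Rightarrow> real) \<Rightarrow> bool" where
  "steep S f \<longleftrightarrow>
     (\<forall>lam0 \<in> frontier (interior S). \<forall>s :: nat \<Rightarrow> real.
        (\<forall>n. s n \<in> interior S) \<and> s \<longlonglongrightarrow> lam0 \<longrightarrow>
        filterlim (\<lambda>n. \<bar>deriv f (s n)\<bar>) at_top sequentially)"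

definition rate_fun :: "'a measure \<Rightarrow> (nat \<Rightarrow> nat \<Rightarrow> 'a \<Rightarrow> real) \<Rightarrow> nat \<Rightarrow> real \<Rightarrow> ereal" where
  "rate_fun M X l x = (SUP lam. ereal (lam * x) - Lambda M X l lam)"

definition G :: "'a measure \<Rightarrow> (nat \<Rightarrow> nat \<Rightarrow> 'a \<Rightarrow> real) \<Rightarrow> nat \<Rightarrow> nat \<Rightarrow> real \<Rightarrow> real \<Rightarrow> ereal" where
  "G M X i j ri rj =
     (INF x. ereal ri * rate_fun M X i x + ereal rj * rate_fun M X j x)"

definition feasible_P1 :: "'a measure \<Rightarrow> (nat \<Rightarrow> nat \<Rightarrow> 'a \<Rightarrow> real) \<Rightarrow> nat \<Rightarrow> nat \<Rightarrow>
    real \<Rightarrow> (nat \<Rightarrow> real) \<Rightarrow> bool" where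
  "feasible_P1 M X k m z r \<longleftrightarrow>
     (\<forall>i\<in>{1..m}. \<forall>j\<in>{m+1..k}. G M X i j (r i) (r j) - ereal z \<ge> 0) \<and>
     (\<Sum>l=1..k. r l) = 1 \<and> (\<forall>l\<in>{1..k}. r l \<ge> 0)"

definition optimal_P1 :: "'a measure \<Rightarrow> (nat \<Rightarrow> nat \<Rightarrow> 'a \<Rightarrow> real) \<Rightarrow> nat \<Rightarrow> nat \<Rightarrow>
    (nat \<Rightarrow> real) \<Rightarrow> bool" where
  "optimal_P1 M X k m r \<longleftrightarrow>
     (\<exists>z. feasible_P1 M X k m z r \<and> (\<forall>z' r'. feasible_P1 M X k m z' r' \<longrightarrow> z' \<le> z))"

definition feasible_P2 :: "'a measure \<Rightarrow> (nat \<Rightarrow> nat \<Rightarrow> 'a \<Rightarrow> real) \<Rightarrow> nat \<Rightarrow> nat \<Rightarrow>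
    real \<Rightarrow> (nat \<Rightarrow> real) \<Rightarrow> bool" where
  "feasible_P2 M X k m z r \<longleftrightarrow>
     (\<forall>i\<in>{1..m}. Min ((\<lambda>j. G M X i j (r i) (r j)) ` {m+1..k}) = ereal z) \<and>
     (\<forall>j\<in>{m+1..k}. Min ((\<lambda>i. G M X i j (r i) (r j)) ` {1..m}) = ereal z) \<and>
     (\<Sum>l=1..k. r l) = 1 \<and> (\<forall>l\<in>{1..k}. r l > 0)"

definition optimal_P2 :: "'a measure \<Rightarrow> (nat \<Rightarrow> nat \<Rightarrow> 'a \<Rightarrow> real) \<Rightarrow> nat \<Rightarrow> nat \<Rightarrow>
    (nat \<Rightarrow> real) \<Rightarrow> bool" where
  "optimal_P2 M X k m r \<longleftrightarrow>
     (\<exists>z. feasible_P2 M X k m z r \<and> (\<forall>z' r'. feasible_P2 M X k m z' r' \<longrightarrow> z' \<le> z))"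

end

theory Submission
  imports Defs
begin

text \<open>For i.i.d. replications, \<open>Lambda\<^sub>l\<close> is the cumulant generating function of a
  single replication. Its Legendre transform, the rate function, is nonnegative, vanishes only
  at the mean, is monotone on either side of it, and is finite on \<open>[mu\<^sub>k, mu\<^sub>1]\<close> because
  the replications put mass on both sides of every point of that interval. Hence the infimum
  defining \<open>G\<^sub>i\<^sub>j\<close> may be taken over \<open>[mu\<^sub>j, mu\<^sub>i]\<close>, which makes \<open>G\<^sub>i\<^sub>j\<close> a
  finite, Lipschitz, monotone and positively homogeneous function of \<open>(r\<^sub>i, r\<^sub>j)\<close> that
  vanishes when one weight is \<open>0\<close> and is positive when both are positive.

  The objective of (P1) is then the minimum of the \<open>G\<^sub>i\<^sub>j\<close>, a continuous function on the
  simplex; it attains its maximum, which is positive, so every maximiser has positive entries.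
  At a maximiser every alternative occurs in a binding pair: otherwise moving a little mass from
  it to all other alternatives would raise the minimum. This gives the balance equations of
  (P2). Conversely the value of any (P2)-feasible point is its (P1) objective, so both problems
  have the same optimal solutions.\<close>

section \<open>Cumulant generating functions\<close>

lemma DERIV_le_of_increments:
  fixes f :: "real \<Rightarrow> real"
  assumes "open S" "t \<in> S" and D: "DERIV f t :> d"
    and incr: "\<And>a b. a \<in> S \<Longrightarrow> b \<in> S \<Longrightarrow> a \<le> b \<Longrightarrow> f b \<le> f a + (b - a) * x"
  shows "d \<le> x"
proof -
  have "((\<lambda>h. (f (t + h) - f t) / h) \<longlongrightarrow> d) (at_right 0)"
    using D by (simp add: DERIV_def filterlim_at_split)
  moreover have "\<forall>\<^sub>F h in at_right 0. t + h \<in> S"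
  proof -
    have "((\<lambda>h. t + h) \<longlongrightarrow> t + 0) (at_right 0)" by (intro tendsto_intros)
    then show ?thesis using assms(1,2) by (simp add: tendsto_def)
  qed
  then have "\<forall>\<^sub>F h in at_right 0. (f (t + h) - f t) / h \<le> x"
    using eventually_at_right_less[of 0]
  proof eventually_elim
    case (elim h)
    then show ?case using incr[OF \<open>t \<in> S\<close>, of "t + h"] by (simp add: divide_le_eq mult.commute)
  qed
  ultimately show "d \<le> x" by (rule tendsto_upperbound) simp
qed

lemma DERIV_ge_of_increments:
  fixes f :: "real \<Rightarrow> real"
  assumes "open S" "t \<in> S" and "DERIV f t :> d"
    and incr: "\<And>a b. a \<in> S \<Longrightarrow> b \<in> S \<Longrightarrow> a \<le> b \<Longrightarrow> f a + (b - a) * x \<le> f b"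
  shows "x \<le> d"
proof -
  have "- d \<le> - x"
  proof (rule DERIV_le_of_increments[OF assms(1,2)])
    show "DERIV (\<lambda>s. - f s) t :> - d" using assms(3) by (rule DERIV_minus)
    show "- f b \<le> - f a + (b - a) * - x" if "a \<in> S" "b \<in> S" "a \<le> b" for a b
      using incr[OF that] by simp
  qed
  then show ?thesis by simp
qed

definition mgf :: "'a measure \<Rightarrow> ('a \<Rightarrow> real) \<Rightarrow> real \<Rightarrow> ennreal" where
  "mgf M Y lam = (\<integral>\<^sup>+ \<omega>. ennreal (exp (lam * Y \<omega>)) \<partial>M)"

lemma log_mgf_mgf:
  "log_mgf M Y lam = (if mgf M Y lam = \<infinity> then \<infinity> else ereal (ln (enn2real (mgf M Y lam))))"
  by (simp add: log_mgf_def mgf_def Let_def)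

lemma log_mgf_less_top_iff: "log_mgf M Y lam < \<infinity> \<longleftrightarrow> mgf M Y lam < \<infinity>"
  by (simp add: log_mgf_mgf less_top)

context prob_space
begin

lemma mgf_pos:
  assumes "Y \<in> borel_measurable M"
  shows "0 < mgf M Y lam"
proof (rule ccontr)
  assume "\<not> 0 < mgf M Y lam"
  then have "AE \<omega> in M. ennreal (exp (lam * Y \<omega>)) = 0"
    unfolding mgf_def using assms by (subst (asm) not_gr_zero, subst (asm) nn_integral_0_iff_AE) auto
  then show False by simp
qed

lemma enn2real_mgf_pos:
  assumes "Y \<in> borel_measurable M" and "mgf M Y lam < \<infinity>"
  shows "0 < enn2real (mgf M Y lam)"
  using assms mgf_pos[OF assms(1), of lam] by (simp add: enn2real_positive_iff)

lemma log_mgf_zero: "log_mgf M Y 0 = 0"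
  by (simp add: log_mgf_def emeasure_space_1)

lemma integrable_of_log_mgf_finite:
  assumes Y: "Y \<in> borel_measurable M" and d: "0 < d"
    and fin: "log_mgf M Y d < \<infinity>" "log_mgf M Y (-d) < \<infinity>"
  shows "integrable M Y"
proof (rule integrableI_bounded[OF Y])
  have "ennreal (norm (Y \<omega>)) \<le> ennreal (1/d) * (ennreal (exp (d * Y \<omega>)) + ennreal (exp ((-d) * Y \<omega>)))"
    for \<omega>
  proof -
    have "d * \<bar>Y \<omega>\<bar> < exp (d * \<bar>Y \<omega>\<bar>)"
      using exp_ge_add_one_self[of "d * \<bar>Y \<omega>\<bar>"] by linarith
    also have "\<dots> \<le> exp (d * Y \<omega>) + exp ((-d) * Y \<omega>)"
      by (cases "0 \<le> Y \<omega>") (auto simp: add_increasing add_increasing2 less_imp_le)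
    finally have "\<bar>Y \<omega>\<bar> \<le> (1/d) * (exp (d * Y \<omega>) + exp ((-d) * Y \<omega>))"
      using d by (simp add: field_simps)
    then show ?thesis
      using d by (simp add: ennreal_mult[symmetric] ennreal_plus[symmetric] del: ennreal_plus)
  qed
  then have "(\<integral>\<^sup>+ \<omega>. ennreal (norm (Y \<omega>)) \<partial>M) \<le>
      (\<integral>\<^sup>+ \<omega>. ennreal (1/d) * (ennreal (exp (d * Y \<omega>)) + ennreal (exp ((-d) * Y \<omega>))) \<partial>M)"
    by (intro nn_integral_mono)
  also have "\<dots> = ennreal (1/d) * (mgf M Y d + mgf M Y (-d))"
    using Y by (simp add: nn_integral_cmult nn_integral_add mgf_def)
  also have "\<dots> < \<infinity>"
    using fin unfolding log_mgf_less_top_iff by (simp add: ennreal_mult_less_top)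
  finally show "(\<integral>\<^sup>+ \<omega>. ennreal (norm (Y \<omega>)) \<partial>M) < \<infinity>" .
qed

text \<open>Jensen's inequality, via the tangent line of \<open>exp\<close> at the mean.\<close>
lemma log_mgf_ge_mean:
  assumes Y: "integrable M Y"
  shows "ereal (lam * expectation Y) \<le> log_mgf M Y lam"
proof (cases "mgf M Y lam = \<infinity>")
  case True
  then show ?thesis by (simp add: log_mgf_mgf)
next
  case False
  define mu where "mu = expectation Y"
  have int: "integrable M (\<lambda>\<omega>. exp (lam * Y \<omega>))"
    using False Y by (intro integrableI_bounded) (auto simp: mgf_def less_top)
  have "exp (lam * mu) = (\<integral>\<omega>. exp (lam * mu) * (1 + (lam * Y \<omega> - lam * mu)) \<partial>M)"
    using Y by (simp add: mu_def algebra_simps prob_space)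
  also have "\<dots> \<le> (\<integral>\<omega>. exp (lam * mu) * exp (lam * Y \<omega> - lam * mu) \<partial>M)"
    using Y int by (intro integral_mono mult_left_mono exp_ge_add_one_self) (auto simp: exp_diff)
  also have "\<dots> = enn2real (mgf M Y lam)"
    using int unfolding mgf_def by (subst nn_integral_eq_integral) (auto simp: exp_diff)
  finally have "lam * mu \<le> ln (enn2real (mgf M Y lam))"
    by (metis exp_gt_zero ln_exp ln_le_cancel_iff order_less_le_trans)
  then show ?thesis using False by (simp add: log_mgf_mgf mu_def)
qed

lemma log_mgf_ge_tail:
  assumes A: "A \<in> sets M" "0 < prob A" and tail: "\<And>\<omega>. \<omega> \<in> A \<Longrightarrow> lam * x \<le> lam * Y \<omega>"
  shows "ereal (lam * x + ln (prob A)) \<le> log_mgf M Y lam"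
proof (cases "mgf M Y lam = \<infinity>")
  case True
  then show ?thesis by (simp add: log_mgf_mgf)
next
  case False
  have "ennreal (exp (lam * x) * prob A) = (\<integral>\<^sup>+ \<omega>. ennreal (exp (lam * x)) * indicator A \<omega> \<partial>M)"
    using A by (simp add: nn_integral_cmult_indicator emeasure_eq_measure ennreal_mult)
  also have "\<dots> \<le> mgf M Y lam"
    unfolding mgf_def using tail by (intro nn_integral_mono) (auto simp: indicator_def)
  finally have "enn2real (ennreal (exp (lam * x) * prob A)) \<le> enn2real (mgf M Y lam)"
    using False by (intro enn2real_mono) (auto simp: less_top)
  then have "exp (lam * x) * prob A \<le> enn2real (mgf M Y lam)"
    by simp
  then have "ln (exp (lam * x) * prob A) \<le> ln (enn2real (mgf M Y lam))"
    using A by (intro ln_mono) auto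
  then show ?thesis using A False by (simp add: ln_mult log_mgf_mgf)
qed

lemma mgf_le_exp_mgf:
  assumes Y: "Y \<in> borel_measurable M" and AE: "AE \<omega> in M. (s - t) * Y \<omega> \<le> c"
  shows "mgf M Y s \<le> ennreal (exp c) * mgf M Y t"
proof -
  have "mgf M Y s \<le> (\<integral>\<^sup>+ \<omega>. ennreal (exp c) * ennreal (exp (t * Y \<omega>)) \<partial>M)"
    unfolding mgf_def
  proof (rule nn_integral_mono_AE)
    show "AE \<omega> in M. ennreal (exp (s * Y \<omega>)) \<le> ennreal (exp c) * ennreal (exp (t * Y \<omega>))"
      using AE
    proof eventually_elim
      case (elim \<omega>)
      have "exp (s * Y \<omega>) = exp ((s - t) * Y \<omega>) * exp (t * Y \<omega>)"
        by (simp add: exp_add[symmetric] algebra_simps)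
      also have "\<dots> \<le> exp c * exp (t * Y \<omega>)" using elim by simp
      finally show ?case by (simp add: ennreal_mult[symmetric])
    qed
  qed
  also have "\<dots> = ennreal (exp c) * mgf M Y t"
    using Y by (simp add: nn_integral_cmult mgf_def)
  finally show ?thesis .
qed

lemma log_mgf_increment_le:
  assumes Y: "Y \<in> borel_measurable M" and AE: "AE \<omega> in M. (s - t) * Y \<omega> \<le> c"
    and fin: "log_mgf M Y s < \<infinity>" "log_mgf M Y t < \<infinity>"
  shows "real_of_ereal (log_mgf M Y s) \<le> real_of_ereal (log_mgf M Y t) + c"
proof -
  have fin': "mgf M Y s < \<infinity>" "mgf M Y t < \<infinity>" using fin by (simp_all only: log_mgf_less_top_iff)
  have "enn2real (mgf M Y s) \<le> exp c * enn2real (mgf M Y t)"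
    using enn2real_mono[OF mgf_le_exp_mgf[OF Y AE]] fin'
    by (simp add: enn2real_mult ennreal_mult_less_top)
  then have "ln (enn2real (mgf M Y s)) \<le> ln (exp c * enn2real (mgf M Y t))"
    using enn2real_mgf_pos[OF Y] fin' by (intro ln_mono) auto
  moreover have "log_mgf M Y s = ereal (ln (enn2real (mgf M Y s)))"
    and "log_mgf M Y t = ereal (ln (enn2real (mgf M Y t)))"
    using fin' by (auto simp: log_mgf_mgf)
  ultimately show ?thesis
    using enn2real_mgf_pos[OF Y fin'(2)] by (simp add: ln_mult)
qed

lemma mgf_sample_mean:
  assumes indep: "indep_vars (\<lambda>_. borel) (\<lambda>(l, n). X l n) (L \<times> UNIV)" and l: "l \<in> L"
    and rv: "\<And>n. X l n \<in> borel_measurable M"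
    and ident: "\<And>n. distr M borel (X l n) = distr M borel (X l 0)"
    and n: "n \<ge> 1"
  shows "mgf M (sample_mean X l n) (real n * lam) = mgf M (X l 0) lam ^ n"
proof -
  define Z where "Z p \<omega> = ennreal (exp (lam * (case p of (l, n) \<Rightarrow> X l n) \<omega>))" for p \<omega>
  have row: "(\<Prod>p\<in>{l} \<times> {..<n}. h p) = (\<Prod>i<n. h (l, i))" for h :: "nat \<times> nat \<Rightarrow> ennreal"
  proof -
    have "{l} \<times> {..<n} = Pair l ` {..<n}" by auto
    then show ?thesis by (simp add: prod.reindex inj_on_def)
  qed
  have indZ: "indep_vars (\<lambda>_. borel) Z ({l} \<times> {..<n})"
    unfolding Z_def
    by (rule indep_vars_compose2[where X="\<lambda>(l, n). X l n" and M'="\<lambda>_. borel"])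
       (rule indep_vars_subset[OF indep], use l in auto)
  have "mgf M (sample_mean X l n) (real n * lam) = (\<integral>\<^sup>+ \<omega>. (\<Prod>p\<in>{l} \<times> {..<n}. Z p \<omega>) \<partial>M)"
    unfolding mgf_def row
  proof (rule nn_integral_cong)
    fix \<omega>
    have "real n * lam * sample_mean X l n \<omega> = lam * (\<Sum>i<n. X l i \<omega>)"
      using n by (simp add: sample_mean_def)
    also have "\<dots> = (\<Sum>i<n. lam * X l i \<omega>)" by (rule sum_distrib_left)
    finally show "ennreal (exp (real n * lam * sample_mean X l n \<omega>)) = (\<Prod>i<n. Z (l, i) \<omega>)"
      by (simp add: Z_def exp_sum prod_ennreal)
  qed
  also have "\<dots> = (\<Prod>p\<in>{l} \<times> {..<n}. \<integral>\<^sup>+ \<omega>. Z p \<omega> \<partial>M)"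
    by (rule indep_vars_nn_integral[OF _ indZ]) auto
  also have "\<dots> = (\<Prod>i<n. mgf M (X l 0) lam)"
    unfolding row
  proof (rule prod.cong[OF refl])
    fix i
    have "(\<integral>\<^sup>+ \<omega>. Z (l, i) \<omega> \<partial>M) = (\<integral>\<^sup>+ y. ennreal (exp (lam * y)) \<partial>distr M borel (X l i))"
      using rv by (simp add: Z_def nn_integral_distr)
    also have "\<dots> = mgf M (X l 0) lam"
      using rv by (simp add: ident[of i] mgf_def nn_integral_distr)
    finally show "(\<integral>\<^sup>+ \<omega>. Z (l, i) \<omega> \<partial>M) = mgf M (X l 0) lam" .
  qed
  finally show ?thesis by simp
qed

text \<open>For i.i.d. replications the sequence defining \<open>Lambda\<close> is constant from \<open>n = 1\<close> on.\<close>
lemma Lambda_eq_log_mgf: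
  assumes indep: "indep_vars (\<lambda>_. borel) (\<lambda>(l, n). X l n) (L \<times> UNIV)" and l: "l \<in> L"
    and rv: "\<And>n. X l n \<in> borel_measurable M"
    and ident: "\<And>n. distr M borel (X l n) = distr M borel (X l 0)"
  shows "Lambda M X l lam = log_mgf M (X l 0) lam"
proof -
  have "Lambda_seq M X l lam n = log_mgf M (X l 0) lam" if n: "n \<ge> 1" for n
  proof -
    have eq: "mgf M (sample_mean X l n) (real n * lam) = mgf M (X l 0) lam ^ n"
      by (rule mgf_sample_mean[OF indep l rv ident n])
    show ?thesis
    proof (cases "mgf M (X l 0) lam = \<infinity>")
      case True
      then have "mgf M (sample_mean X l n) (real n * lam) = \<infinity>"
        using eq n by (simp add: power_eq_top_ennreal)
      then show ?thesis
        using True n by (simp add: Lambda_seq_def Lambda_n_def log_mgf_mgf)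
    next
      case False
      define c where "c = enn2real (mgf M (X l 0) lam)"
      have c: "mgf M (X l 0) lam = ennreal c" "0 < c"
        using False enn2real_mgf_pos[OF rv] by (auto simp: c_def less_top)
      then have "mgf M (sample_mean X l n) (real n * lam) = ennreal (c ^ n)"
        using eq by (simp add: ennreal_power)
      then show ?thesis
        using c n by (simp add: Lambda_seq_def Lambda_n_def log_mgf_mgf ln_realpow)
    qed
  qed
  then have "Lambda_seq M X l lam \<longlonglongrightarrow> log_mgf M (X l 0) lam"
    by (intro tendsto_eventually) (auto simp: eventually_sequentially)
  then show ?thesis unfolding Lambda_def by (rule limI)
qed

text \<open>An a.s. bound \<open>Y \<le> x\<close> would bound every slope of the cumulant generating function,
  hence every derivative, by \<open>x\<close>.\<close>
lemma prob_tails_pos: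
  assumes Y: "Y \<in> borel_measurable M"
    and diff: "(\<lambda>t. real_of_ereal (log_mgf M Y t)) differentiable_on interior {t. log_mgf M Y t < \<infinity>}"
    and x: "x \<in> interior ((\<lambda>t. deriv (\<lambda>t. real_of_ereal (log_mgf M Y t)) t) `
                            interior {t. log_mgf M Y t < \<infinity>})"
  shows "0 < prob {\<omega>\<in>space M. x \<le> Y \<omega>}" and "0 < prob {\<omega>\<in>space M. Y \<omega> \<le> x}"
proof -
  define LR where "LR t = real_of_ereal (log_mgf M Y t)" for t
  define S where "S = interior {t. log_mgf M Y t < \<infinity>}"
  have fin: "log_mgf M Y t < \<infinity>" if "t \<in> S" for t
    using that interior_subset unfolding S_def by blast
  have DER: "DERIV LR t :> deriv LR t" if t: "t \<in> S" for t
  proof -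
    have "LR differentiable (at t within S)"
      using diff t unfolding LR_def[abs_def] S_def differentiable_on_def by blast
    then show ?thesis
      using at_within_open[OF t] by (simp add: S_def DERIV_deriv_iff_real_differentiable)
  qed
  obtain e where e: "e > 0" "ball x e \<subseteq> (\<lambda>t. deriv LR t) ` S"
    using x unfolding LR_def[abs_def] S_def[symmetric] by (meson mem_interior)
  have "x + e/2 \<in> ball x e" "x - e/2 \<in> ball x e" using e by (auto simp: dist_real_def)
  then have "x + e/2 \<in> (\<lambda>t. deriv LR t) ` S" "x - e/2 \<in> (\<lambda>t. deriv LR t) ` S"
    using e(2) by blast+
  then obtain t1 t2 where t1: "t1 \<in> S" "deriv LR t1 = x + e/2"
    and t2: "t2 \<in> S" "deriv LR t2 = x - e/2"
    by (metis imageE)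
  have upper: "{\<omega>\<in>space M. x \<le> Y \<omega>} \<in> sets M" and lower: "{\<omega>\<in>space M. Y \<omega> \<le> x} \<in> sets M"
    using Y by measurable
  show "0 < prob {\<omega>\<in>space M. x \<le> Y \<omega>}"
  proof (rule ccontr)
    assume "\<not> ?thesis"
    then have "AE \<omega> in M. \<not> x \<le> Y \<omega>"
      by (simp add: prob_Collect_eq_0[OF upper, symmetric] not_less measure_le_0_iff)
    then have AE: "AE \<omega> in M. Y \<omega> \<le> x" by eventually_elim simp
    have "deriv LR t1 \<le> x"
    proof (rule DERIV_le_of_increments[OF _ t1(1) DER[OF t1(1)]])
      fix a b assume ab: "a \<in> S" "b \<in> S" "a \<le> b"
      have "AE \<omega> in M. (b - a) * Y \<omega> \<le> (b - a) * x"
        using AE by eventually_elim (use ab in \<open>simp add: mult_left_mono\<close>)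
      then show "LR b \<le> LR a + (b - a) * x"
        unfolding LR_def using log_mgf_increment_le[OF Y _ fin fin] ab by blast
    qed (simp add: S_def)
    then show False using t1 e by simp
  qed
  show "0 < prob {\<omega>\<in>space M. Y \<omega> \<le> x}"
  proof (rule ccontr)
    assume "\<not> ?thesis"
    then have "AE \<omega> in M. \<not> Y \<omega> \<le> x"
      by (simp add: prob_Collect_eq_0[OF lower, symmetric] not_less measure_le_0_iff)
    then have AE: "AE \<omega> in M. x \<le> Y \<omega>" by eventually_elim simp
    have "x \<le> deriv LR t2"
    proof (rule DERIV_ge_of_increments[OF _ t2(1) DER[OF t2(1)]])
      fix a b assume ab: "a \<in> S" "b \<in> S" "a \<le> b"
      have "AE \<omega> in M. (a - b) * Y \<omega> \<le> (a - b) * x"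
        using AE by eventually_elim (use ab in \<open>simp add: mult_left_mono_neg\<close>)
      then have "LR a \<le> LR b + (a - b) * x"
        unfolding LR_def using ab by (intro log_mgf_increment_le[OF Y _ fin fin])
      then show "LR a + (b - a) * x \<le> LR b" by (simp add: algebra_simps)
    qed (simp add: S_def)
    then show False using t2 e by simp
  qed
qed

lemma Legendre_log_mgf_finite:
  assumes Y: "Y \<in> borel_measurable M"
    and tails: "0 < prob {\<omega>\<in>space M. x \<le> Y \<omega>}" "0 < prob {\<omega>\<in>space M. Y \<omega> \<le> x}"
  shows "(SUP t. ereal (t * x) - log_mgf M Y t) < \<infinity>"
proof -
  define C where "C = max (- ln (prob {\<omega>\<in>space M. x \<le> Y \<omega>})) (- ln (prob {\<omega>\<in>space M. Y \<omega> \<le> x}))"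
  have minus_le: "ereal a - L \<le> ereal (a - c)" if "ereal c \<le> L" for a c L
    using that by (cases L) auto
  have upper: "{\<omega>\<in>space M. x \<le> Y \<omega>} \<in> sets M" and lower: "{\<omega>\<in>space M. Y \<omega> \<le> x} \<in> sets M"
    using Y by measurable
  have "ereal (t * x) - log_mgf M Y t \<le> ereal C" for t
  proof (cases "0 \<le> t")
    case True
    have "ereal (t * x + ln (prob {\<omega>\<in>space M. x \<le> Y \<omega>})) \<le> log_mgf M Y t"
      using True by (intro log_mgf_ge_tail[OF upper tails(1)]) (simp add: mult_left_mono)
    from minus_le[OF this, of "t * x"] show ?thesis by (simp add: C_def le_max_iff_disj)
  next
    case False
    have "ereal (t * x + ln (prob {\<omega>\<in>space M. Y \<omega> \<le> x})) \<le> log_mgf M Y t"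
      using False by (intro log_mgf_ge_tail[OF lower tails(2)]) (simp add: mult_left_mono_neg)
    from minus_le[OF this, of "t * x"] show ?thesis by (simp add: C_def le_max_iff_disj)
  qed
  then have "(SUP t. ereal (t * x) - log_mgf M Y t) \<le> ereal C" by (rule SUP_least)
  then show ?thesis by (rule order.strict_trans1) simp
qed

end

section \<open>Rate functions\<close>

locale cumulant =
  fixes Lam :: "real \<Rightarrow> ereal" and mu :: real
  assumes Lam_0: "Lam 0 = 0"
    and Lam_ge_linear: "\<And>t. ereal (t * mu) \<le> Lam t"
    and differentiable_at_0: "(\<lambda>t. real_of_ereal (Lam t)) differentiable at 0"
    and zero_in_interior_dom: "0 \<in> interior {t. Lam t < \<infinity>}"
begin

definition rate :: "real \<Rightarrow> ereal" where
  "rate x = (SUP t. ereal (t * x) - Lam t)"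

lemma rate_ge: "ereal (t * x) - Lam t \<le> rate x"
  unfolding rate_def by (rule SUP_upper) simp

lemma rate_nonneg: "0 \<le> rate x"
  using rate_ge[of 0 x] by (simp add: Lam_0 zero_ereal_def)

lemma rate_le_0_iff: "rate x \<le> 0 \<longleftrightarrow> (\<forall>t. ereal (t * x) \<le> Lam t)"
proof -
  have "ereal a - L \<le> 0 \<longleftrightarrow> ereal a \<le> L" for a L by (cases L) auto
  then show ?thesis unfolding rate_def by (simp add: SUP_le_iff)
qed

text \<open>A linear minorant of \<open>Lam\<close> through the origin touches it at \<open>0\<close>, where \<open>Lam\<close> is
  differentiable, so its slope is the derivative there.\<close>
lemma linear_minorant_slope:
  assumes "\<And>t. ereal (t * c) \<le> Lam t"
  shows "c = deriv (\<lambda>t. real_of_ereal (Lam t)) 0"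
proof -
  define LR where "LR t = real_of_ereal (Lam t)" for t
  obtain e where e: "0 < e" "ball 0 e \<subseteq> {t. Lam t < \<infinity>}"
    using zero_in_interior_dom by (meson mem_interior)
  have "DERIV LR 0 :> deriv LR 0"
    using differentiable_at_0 unfolding LR_def[abs_def] by (simp add: DERIV_deriv_iff_real_differentiable)
  then have D: "DERIV (\<lambda>t. LR t - t * c) 0 :> deriv LR 0 - c"
    by (auto intro!: derivative_eq_intros)
  have "deriv LR 0 - c = 0"
  proof (rule DERIV_local_min[OF D e(1)], intro allI impI)
    fix y :: real
    assume "\<bar>0 - y\<bar> < e"
    then have "Lam y < \<infinity>" using e(2) by (auto simp: dist_real_def)
    then have "y * c \<le> LR y" using assms[of y] unfolding LR_def by (cases "Lam y") auto
    then show "LR 0 - 0 * c \<le> LR y - y * c" by (simp add: LR_def Lam_0)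
  qed
  then show ?thesis by (simp add: LR_def[abs_def])
qed

lemma rate_eq_0_iff: "rate x = 0 \<longleftrightarrow> x = mu"
proof
  assume "rate x = 0"
  then have "x = deriv (\<lambda>t. real_of_ereal (Lam t)) 0"
    using rate_le_0_iff[of x] by (intro linear_minorant_slope) simp
  then show "x = mu" using linear_minorant_slope[OF Lam_ge_linear] by simp
next
  assume "x = mu"
  then have "rate x \<le> 0" using Lam_ge_linear by (simp add: rate_le_0_iff)
  then show "rate x = 0" using rate_nonneg[of x] by simp
qed

text \<open>Every \<open>t * y\<close> is dominated by \<open>t * x\<close> or by \<open>t * mu \<le> Lam t\<close>.\<close>
lemma rate_le_between:
  assumes "min x mu \<le> y" "y \<le> max x mu"
  shows "rate y \<le> rate x"
  unfolding rate_def[of y]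
proof (rule SUP_least)
  fix t
  have "t * y \<le> t * max x mu \<or> t * y \<le> t * min x mu"
    using mult_left_mono[OF assms(2), of t] mult_left_mono_neg[OF assms(1), of t] by linarith
  then have "t * y \<le> t * x \<or> t * y \<le> t * mu"
    by (auto simp: max_def min_def split: if_splits)
  then show "ereal (t * y) - Lam t \<le> rate x"
  proof
    assume "t * y \<le> t * x"
    then have "ereal (t * y) - Lam t \<le> ereal (t * x) - Lam t" by (cases "Lam t") auto
    then show ?thesis using rate_ge order_trans by blast
  next
    assume "t * y \<le> t * mu"
    then have "ereal (t * y) \<le> ereal (t * mu)" by simp
    then have "ereal (t * y) \<le> Lam t" using Lam_ge_linear[of t] by (rule order_trans)
    then have "ereal (t * y) - Lam t \<le> 0" by (cases "Lam t") auto
    then show ?thesis using rate_nonneg order_trans by blast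
  qed
qed

end

section \<open>The pairwise rates \<open>G\<^sub>i\<^sub>j\<close>\<close>

locale rate_pair = R1: cumulant Lam1 mu1 + R2: cumulant Lam2 mu2
  for Lam1 mu1 Lam2 mu2 +
  assumes means_less: "mu2 < mu1"
    and rate1_finite: "R1.rate mu2 < \<infinity>" and rate2_finite: "R2.rate mu1 < \<infinity>"
begin

definition I1 :: "real \<Rightarrow> real" where "I1 x = real_of_ereal (R1.rate x)"
definition I2 :: "real \<Rightarrow> real" where "I2 x = real_of_ereal (R2.rate x)"

text \<open>The infimum defining \<open>G\<close> may be restricted to the interval between the two means,
  where both rate functions are finite.\<close>
definition pair_rate :: "real \<Rightarrow> real \<Rightarrow> real" where
  "pair_rate a b = Inf ((\<lambda>x. a * I1 x + b * I2 x) ` {mu2..mu1})"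

lemma rate1_on_means:
  assumes "x \<in> {mu2..mu1}"
  shows "R1.rate x = ereal (I1 x)" "0 \<le> I1 x" "I1 x \<le> I1 mu2"
proof -
  have le: "R1.rate x \<le> R1.rate mu2"
    using assms by (intro R1.rate_le_between) auto
  then have "R1.rate x < \<infinity>" using rate1_finite by (rule order.strict_trans1)
  then show eq: "R1.rate x = ereal (I1 x)"
    using R1.rate_nonneg[of x] by (cases "R1.rate x") (auto simp: I1_def)
  then show "0 \<le> I1 x" using R1.rate_nonneg[of x] by simp
  have "R1.rate mu2 = ereal (I1 mu2)"
    using rate1_finite R1.rate_nonneg[of mu2] by (cases "R1.rate mu2") (auto simp: I1_def)
  then show "I1 x \<le> I1 mu2" using le eq by simp
qed

lemma rate2_on_means:
  assumes "x \<in> {mu2..mu1}"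
  shows "R2.rate x = ereal (I2 x)" "0 \<le> I2 x" "I2 x \<le> I2 mu1"
proof -
  have le: "R2.rate x \<le> R2.rate mu1"
    using assms by (intro R2.rate_le_between) auto
  then have "R2.rate x < \<infinity>" using rate2_finite by (rule order.strict_trans1)
  then show eq: "R2.rate x = ereal (I2 x)"
    using R2.rate_nonneg[of x] by (cases "R2.rate x") (auto simp: I2_def)
  then show "0 \<le> I2 x" using R2.rate_nonneg[of x] by simp
  have "R2.rate mu1 = ereal (I2 mu1)"
    using rate2_finite R2.rate_nonneg[of mu1] by (cases "R2.rate mu1") (auto simp: I2_def)
  then show "I2 x \<le> I2 mu1" using le eq by simp
qed

lemma means_in_interval: "mu1 \<in> {mu2..mu1}" "mu2 \<in> {mu2..mu1}"
  using means_less by auto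

lemma I1_mean: "I1 mu1 = 0" and I2_mean: "I2 mu2 = 0"
  using R1.rate_eq_0_iff[of mu1] R2.rate_eq_0_iff[of mu2] by (simp_all add: I1_def I2_def)

lemma pair_rate_le:
  assumes "0 \<le> a" "0 \<le> b" "x \<in> {mu2..mu1}"
  shows "pair_rate a b \<le> a * I1 x + b * I2 x"
  unfolding pair_rate_def
proof (rule cInf_lower)
  show "bdd_below ((\<lambda>x. a * I1 x + b * I2 x) ` {mu2..mu1})"
    using assms(1,2) rate1_on_means(2) rate2_on_means(2) by (intro bdd_belowI2[of _ 0]) auto
qed (use assms in auto)

lemma pair_rate_greatest:
  assumes "\<And>x. x \<in> {mu2..mu1} \<Longrightarrow> z \<le> a * I1 x + b * I2 x"
  shows "z \<le> pair_rate a b"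
  unfolding pair_rate_def using assms means_less by (intro cInf_greatest) auto

lemma pair_rate_nonneg: "0 \<le> a \<Longrightarrow> 0 \<le> b \<Longrightarrow> 0 \<le> pair_rate a b"
  using rate1_on_means(2) rate2_on_means(2) by (intro pair_rate_greatest) auto

lemma pair_rate_0_left: "0 \<le> b \<Longrightarrow> pair_rate 0 b = 0"
  using pair_rate_le[of 0 b mu2] pair_rate_nonneg[of 0 b] means_in_interval I2_mean by simp

lemma pair_rate_0_right: "0 \<le> a \<Longrightarrow> pair_rate a 0 = 0"
  using pair_rate_le[of a 0 mu1] pair_rate_nonneg[of a 0] means_in_interval I1_mean by simp

lemma pair_rate_scale:
  assumes "0 \<le> t" "0 \<le> a" "0 \<le> b" "t * a \<le> a'" "t * b \<le> b'"
  shows "t * pair_rate a b \<le> pair_rate a' b'"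
proof (rule pair_rate_greatest)
  fix x
  assume x: "x \<in> {mu2..mu1}"
  have "t * pair_rate a b \<le> t * (a * I1 x + b * I2 x)"
    using pair_rate_le[OF assms(2,3) x] assms(1) by (rule mult_left_mono)
  also have "\<dots> = (t * a) * I1 x + (t * b) * I2 x" by (simp add: algebra_simps)
  also have "\<dots> \<le> a' * I1 x + b' * I2 x"
    using rate1_on_means(2)[OF x] rate2_on_means(2)[OF x] assms(4,5)
    by (intro add_mono mult_right_mono)
  finally show "t * pair_rate a b \<le> a' * I1 x + b' * I2 x" .
qed

text \<open>Both rates are positive at the midpoint \<open>c\<close> of the means, and every \<open>x\<close> is on the
  far side of \<open>c\<close> from one of the means.\<close>
lemma pair_rate_pos:
  assumes a: "0 < a" and b: "0 < b"
  shows "0 < pair_rate a b"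
proof -
  define c where "c = (mu1 + mu2) / 2"
  have c: "c \<in> {mu2..mu1}" "c \<noteq> mu1" "c \<noteq> mu2" using means_less by (auto simp: c_def)
  have "0 < I1 c" "0 < I2 c"
    using c rate1_on_means[OF c(1)] rate2_on_means[OF c(1)]
    by (auto simp: R1.rate_eq_0_iff[symmetric] R2.rate_eq_0_iff[symmetric] zero_ereal_def)
  then have "0 < min (a * I1 c) (b * I2 c)" using a b by simp
  also have "\<dots> \<le> pair_rate a b"
  proof (rule pair_rate_greatest)
    fix x
    assume x: "x \<in> {mu2..mu1}"
    show "min (a * I1 c) (b * I2 c) \<le> a * I1 x + b * I2 x"
    proof (cases "x \<le> c")
      case True
      then have "R1.rate c \<le> R1.rate x" using means_less by (intro R1.rate_le_between) (auto simp: c_def)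
      then have "a * I1 c \<le> a * I1 x"
        using a rate1_on_means[OF x] rate1_on_means[OF c(1)] by simp
      then show ?thesis using b rate2_on_means(2)[OF x] by (simp add: min_le_iff_disj add_increasing2)
    next
      case False
      then have "R2.rate c \<le> R2.rate x" using means_less by (intro R2.rate_le_between) (auto simp: c_def)
      then have "b * I2 c \<le> b * I2 x"
        using b rate2_on_means[OF x] rate2_on_means[OF c(1)] by simp
      then show ?thesis using a rate1_on_means(2)[OF x] by (simp add: min_le_iff_disj add_increasing)
    qed
  qed
  finally show ?thesis .
qed

lemma pair_rate_lipschitz:
  assumes "0 \<le> a" "0 \<le> b" "0 \<le> a'" "0 \<le> b'"
  shows "pair_rate a' b' - (I1 mu2 + I2 mu1) * (\<bar>a - a'\<bar> + \<bar>b - b'\<bar>) \<le> pair_rate a b"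
proof (rule pair_rate_greatest)
  fix x
  assume x: "x \<in> {mu2..mu1}"
  note r1 = rate1_on_means[OF x] and r2 = rate2_on_means[OF x]
  have "(a' - a) * I1 x \<le> \<bar>a - a'\<bar> * I1 x" "\<bar>a - a'\<bar> * I1 x \<le> \<bar>a - a'\<bar> * I1 mu2"
    using r1 by (auto intro: mult_right_mono mult_left_mono)
  then have "a' * I1 x \<le> a * I1 x + \<bar>a - a'\<bar> * I1 mu2" by (simp add: algebra_simps)
  moreover have "(b' - b) * I2 x \<le> \<bar>b - b'\<bar> * I2 x" "\<bar>b - b'\<bar> * I2 x \<le> \<bar>b - b'\<bar> * I2 mu1"
    using r2 by (auto intro: mult_right_mono mult_left_mono)
  then have "b' * I2 x \<le> b * I2 x + \<bar>b - b'\<bar> * I2 mu1" by (simp add: algebra_simps)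
  moreover have "0 \<le> I1 mu2" "0 \<le> I2 mu1"
    using rate1_on_means(2) rate2_on_means(2) means_in_interval by auto
  moreover have "pair_rate a' b' \<le> a' * I1 x + b' * I2 x"
    using assms(3,4) x by (rule pair_rate_le)
  ultimately show "pair_rate a' b' - (I1 mu2 + I2 mu1) * (\<bar>a - a'\<bar> + \<bar>b - b'\<bar>) \<le> a * I1 x + b * I2 x"
    by (simp add: algebra_simps) (smt (verit) abs_ge_zero mult_nonneg_nonneg)
qed

lemma continuous_on_pair_rate: "continuous_on ({0..} \<times> {0..}) (\<lambda>p. pair_rate (fst p) (snd p))"
proof (rule lipschitz_on_continuous_on)
  define C where "C = I1 mu2 + I2 mu1"
  have C: "0 \<le> C" using rate1_on_means(2) rate2_on_means(2) means_in_interval by (auto simp: C_def)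
  show "(2 * C)-lipschitz_on ({0..} \<times> {0..}) (\<lambda>p. pair_rate (fst p) (snd p))"
  proof (rule lipschitz_onI)
    fix p q :: "real \<times> real"
    assume "p \<in> {0..} \<times> {0..}" "q \<in> {0..} \<times> {0..}"
    then obtain a b a' b' where pq: "p = (a, b)" "q = (a', b')" and nn: "0 \<le> a" "0 \<le> b" "0 \<le> a'" "0 \<le> b'"
      by (cases p, cases q) auto
    have d: "\<bar>a - a'\<bar> \<le> dist p q" "\<bar>b - b'\<bar> \<le> dist p q"
      unfolding pq dist_Pair_Pair dist_real_def
      by (rule real_sqrt_sum_squares_ge1, rule real_sqrt_sum_squares_ge2)
    have "\<bar>pair_rate a b - pair_rate a' b'\<bar> \<le> C * (\<bar>a - a'\<bar> + \<bar>b - b'\<bar>)"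
      using pair_rate_lipschitz[OF nn] pair_rate_lipschitz[OF nn(3,4,1,2)]
      by (simp add: C_def abs_minus_commute abs_le_iff)
    also have "\<dots> \<le> C * (2 * dist p q)" using C d by (intro mult_left_mono) auto
    finally show "dist (pair_rate (fst p) (snd p)) (pair_rate (fst q) (snd q)) \<le> 2 * C * dist p q"
      by (simp add: pq dist_real_def)
  qed (use C in simp)
qed

text \<open>Clamping \<open>x\<close> to the interval between the means lowers both rates.\<close>
lemma INF_rates_eq_pair_rate:
  assumes a: "0 \<le> a" and b: "0 \<le> b"
  shows "(INF x. ereal a * R1.rate x + ereal b * R2.rate x) = ereal (pair_rate a b)"
proof (rule antisym)
  show "ereal (pair_rate a b) \<le> (INF x. ereal a * R1.rate x + ereal b * R2.rate x)"
  proof (rule INF_greatest)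
    fix x
    define y where "y = max mu2 (min mu1 x)"
    have y: "y \<in> {mu2..mu1}" using means_less by (auto simp: y_def)
    have "R1.rate y \<le> R1.rate x" "R2.rate y \<le> R2.rate x"
      using means_less by (auto simp: y_def intro!: R1.rate_le_between R2.rate_le_between)
    then have "ereal a * R1.rate y + ereal b * R2.rate y \<le> ereal a * R1.rate x + ereal b * R2.rate x"
      using a b by (intro add_mono ereal_mult_left_mono) auto
    moreover have "ereal (pair_rate a b) \<le> ereal a * R1.rate y + ereal b * R2.rate y"
      using pair_rate_le[OF a b y] rate1_on_means(1)[OF y] rate2_on_means(1)[OF y] by simp
    ultimately show "ereal (pair_rate a b) \<le> ereal a * R1.rate x + ereal b * R2.rate x"
      by (rule order_trans[rotated])
  qed
next
  define T where "T = (INF x. ereal a * R1.rate x + ereal b * R2.rate x)"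
  have T_le: "T \<le> ereal (a * I1 x + b * I2 x)" if x: "x \<in> {mu2..mu1}" for x
    using INF_lower[of x UNIV "\<lambda>x. ereal a * R1.rate x + ereal b * R2.rate x"]
      rate1_on_means(1)[OF x] rate2_on_means(1)[OF x] by (simp add: T_def)
  have "T \<le> ereal (pair_rate a b)"
  proof (cases T)
    case (real t)
    then have "t \<le> pair_rate a b" using T_le by (intro pair_rate_greatest) auto
    then show ?thesis using real by simp
  next
    case PInf
    then show ?thesis using T_le[OF means_in_interval(1)] by simp
  qed simp
  then show "(INF x. ereal a * R1.rate x + ereal b * R2.rate x) \<le> ereal (pair_rate a b)"
    by (simp add: T_def)
qed

end

section \<open>The two allocation problems\<close>

definition allocations :: "nat \<Rightarrow> (nat \<Rightarrow> real) set" where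
  "allocations k = {r. (\<forall>l\<in>{1..k}. 0 \<le> r l) \<and> (\<Sum>l=1..k. r l) = 1}"

definition is_optimal :: "(real \<Rightarrow> 'b \<Rightarrow> bool) \<Rightarrow> 'b \<Rightarrow> bool" where
  "is_optimal feasible r \<longleftrightarrow> (\<exists>z. feasible z r \<and> (\<forall>z' r'. feasible z' r' \<longrightarrow> z' \<le> z))"

lemma allocation_le_1: "r \<in> allocations k \<Longrightarrow> l \<in> {1..k} \<Longrightarrow> r l \<le> 1"
  unfolding allocations_def using member_le_sum[of l "{1..k}" r] by auto

lemma compact_allocations_supported:
  "compact {r \<in> allocations k. \<forall>l. l \<notin> {1..k} \<longrightarrow> r l = 0}"
proof -
  define T where "T l = (if l \<in> {1..k} then {0..1::real} else {0})" for l
  have "{r \<in> allocations k. \<forall>l. l \<notin> {1..k} \<longrightarrow> r l = 0} = Pi\<^sub>E UNIV T \<inter> {r. (\<Sum>l=1..k. r l) = 1}"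
    using allocation_le_1 by (fastforce simp: allocations_def T_def PiE_iff split: if_splits)
  moreover have "compact (Pi\<^sub>E UNIV T)"
  proof -
    have "compactin (product_topology (\<lambda>_. euclidean) UNIV) (Pi\<^sub>E UNIV T)"
      by (simp add: compactin_PiE T_def)
    then show ?thesis by (simp add: euclidean_product_topology)
  qed
  moreover have "closed {r :: nat \<Rightarrow> real. (\<Sum>l=1..k. r l) = 1}"
    by (intro closed_Collect_eq continuous_intros) (auto intro: continuous_on_product_coordinates)
  ultimately show ?thesis by (simp add: compact_Int_closed)
qed

lemma continuous_on_Min:
  fixes h :: "'i \<Rightarrow> 'x::topological_space \<Rightarrow> real"
  assumes "finite A" "A \<noteq> {}" "\<And>a. a \<in> A \<Longrightarrow> continuous_on K (h a)"
  shows "continuous_on K (\<lambda>x. Min ((\<lambda>a. h a x) ` A))"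
  using assms
proof (induction A rule: finite_ne_induct)
  case (insert a F)
  then have "continuous_on K (\<lambda>x. min (h a x) (Min ((\<lambda>a. h a x) ` F)))"
    by (intro continuous_on_min) auto
  then show ?case using insert by (simp add: Min_insert)
qed simp

lemma exists_scale_below_1:
  fixes f :: "'a \<Rightarrow> real"
  assumes "finite A" "\<And>a. a \<in> A \<Longrightarrow> z < f a"
  shows "\<exists>t. 0 < t \<and> t < 1 \<and> (\<forall>a\<in>A. z < t * f a)"
proof -
  have "\<forall>\<^sub>F t in at_left 1. \<forall>a\<in>A. z < t * f a"
  proof (rule eventually_ball_finite[OF assms(1)], rule ballI)
    fix a
    assume "a \<in> A"
    have "((\<lambda>t. t * f a) \<longlongrightarrow> 1 * f a) (at_left 1)" by (intro tendsto_intros)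
    then show "\<forall>\<^sub>F t in at_left 1. z < t * f a" using assms(2)[OF \<open>a \<in> A\<close>] by (simp add: order_tendstoD)
  qed
  then have "\<forall>\<^sub>F t in at_left 1. 0 < t \<and> t < 1 \<and> (\<forall>a\<in>A. z < t * f a)"
    using eventually_at_left_real[OF zero_less_one] by eventually_elim auto
  then show ?thesis using eventually_happens'[OF trivial_limit_at_left_real] by blast
qed

locale allocation =
  fixes k m :: nat and g :: "nat \<Rightarrow> nat \<Rightarrow> real \<Rightarrow> real \<Rightarrow> real"
  assumes m_pos: "1 \<le> m" and m_less: "m < k"
    and g_0_left: "\<And>i j b. i \<in> {1..m} \<Longrightarrow> j \<in> {m+1..k} \<Longrightarrow> 0 \<le> b \<Longrightarrow> g i j 0 b = 0"
    and g_0_right: "\<And>i j a. i \<in> {1..m} \<Longrightarrow> j \<in> {m+1..k} \<Longrightarrow> 0 \<le> a \<Longrightarrow> g i j a 0 = 0"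
    and g_pos: "\<And>i j a b. i \<in> {1..m} \<Longrightarrow> j \<in> {m+1..k} \<Longrightarrow> 0 < a \<Longrightarrow> 0 < b \<Longrightarrow> 0 < g i j a b"
    and g_scale: "\<And>i j a b a' b' t. i \<in> {1..m} \<Longrightarrow> j \<in> {m+1..k} \<Longrightarrow> 0 \<le> t \<Longrightarrow> 0 \<le> a \<Longrightarrow> 0 \<le> b
        \<Longrightarrow> t * a \<le> a' \<Longrightarrow> t * b \<le> b' \<Longrightarrow> t * g i j a b \<le> g i j a' b'"
    and g_continuous: "\<And>i j. i \<in> {1..m} \<Longrightarrow> j \<in> {m+1..k} \<Longrightarrow>
        continuous_on ({0..} \<times> {0..}) (\<lambda>p. g i j (fst p) (snd p))"
begin

text \<open>(P1) maximises \<open>min_rate\<close> over \<open>allocations k\<close>; \<open>balanced\<close> is the feasibility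
  condition of (P2).\<close>
definition min_rate :: "(nat \<Rightarrow> real) \<Rightarrow> real" where
  "min_rate r = Min ((\<lambda>(i, j). g i j (r i) (r j)) ` ({1..m} \<times> {m+1..k}))"

definition balanced :: "real \<Rightarrow> (nat \<Rightarrow> real) \<Rightarrow> bool" where
  "balanced z r \<longleftrightarrow>
     (\<forall>i\<in>{1..m}. Min ((\<lambda>j. g i j (r i) (r j)) ` {m+1..k}) = z) \<and>
     (\<forall>j\<in>{m+1..k}. Min ((\<lambda>i. g i j (r i) (r j)) ` {1..m}) = z) \<and>
     (\<Sum>l=1..k. r l) = 1 \<and> (\<forall>l\<in>{1..k}. r l > 0)"

lemma min_rate_ge_iff: "z \<le> min_rate r \<longleftrightarrow> (\<forall>i\<in>{1..m}. \<forall>j\<in>{m+1..k}. z \<le> g i j (r i) (r j))"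
  unfolding min_rate_def using m_pos m_less by (subst Min_ge_iff) auto

lemma min_rate_gt_iff: "z < min_rate r \<longleftrightarrow> (\<forall>i\<in>{1..m}. \<forall>j\<in>{m+1..k}. z < g i j (r i) (r j))"
  unfolding min_rate_def using m_pos m_less by (subst Min_gr_iff) auto

lemma min_rate_le: "i \<in> {1..m} \<Longrightarrow> j \<in> {m+1..k} \<Longrightarrow> min_rate r \<le> g i j (r i) (r j)"
  using min_rate_ge_iff by blast

lemma continuous_on_min_rate:
  "continuous_on {r. \<forall>l\<in>{1..k}. 0 \<le> r l} min_rate"
  unfolding min_rate_def
proof (rule continuous_on_Min)
  fix p
  assume "p \<in> {1..m} \<times> {m+1..k}"
  then obtain i j where ij: "p = (i, j)" "i \<in> {1..m}" "j \<in> {m+1..k}" by auto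
  have "continuous_on {r. \<forall>l\<in>{1..k}. 0 \<le> r l} (\<lambda>r. (\<lambda>q. g i j (fst q) (snd q)) (r i, r j))"
    using ij m_less
    by (intro continuous_on_compose2[OF g_continuous[OF ij(2,3)]] continuous_intros
          continuous_on_subset[OF continuous_on_product_coordinates]) auto
  then show "continuous_on {r. \<forall>l\<in>{1..k}. 0 \<le> r l} (\<lambda>r. case p of (i, j) \<Rightarrow> g i j (r i) (r j))"
    using ij by simp
qed (use m_pos m_less in auto)

lemma exists_max_min_rate: "\<exists>r0\<in>allocations k. \<forall>r\<in>allocations k. min_rate r \<le> min_rate r0"
proof -
  define K where "K = {r \<in> allocations k. \<forall>l. l \<notin> {1..k} \<longrightarrow> r l = 0}"
  have "(\<lambda>l. if l \<in> {1..k} then 1 / real k else 0) \<in> K"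
    using m_less by (auto simp: K_def allocations_def)
  then have "K \<noteq> {}" by blast
  moreover have "continuous_on K min_rate"
    by (rule continuous_on_subset[OF continuous_on_min_rate]) (auto simp: K_def allocations_def)
  ultimately obtain r0 where r0: "r0 \<in> K" "\<And>r. r \<in> K \<Longrightarrow> min_rate r \<le> min_rate r0"
    using continuous_attains_sup[OF compact_allocations_supported[of k, folded K_def]] by blast
  have "min_rate r \<le> min_rate r0" if r: "r \<in> allocations k" for r
  proof -
    define r' where "r' l = (if l \<in> {1..k} then r l else 0)" for l
    have "r' \<in> K" using r by (auto simp: K_def allocations_def r'_def)
    moreover have "min_rate r = min_rate r'"
      unfolding min_rate_def using m_less by (intro arg_cong[where f=Min] image_cong) (auto simp: r'_def)
    ultimately show ?thesis using r0 by simp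
  qed
  then show ?thesis using r0 by (auto simp: K_def)
qed

lemma exists_min_rate_pos: "\<exists>u\<in>allocations k. 0 < min_rate u"
proof
  define u where "u l = 1 / real k" for l :: nat
  show "u \<in> allocations k" using m_less by (auto simp: allocations_def u_def)
  show "0 < min_rate u" unfolding min_rate_gt_iff using m_less by (auto simp: u_def intro!: g_pos)
qed

lemma pos_of_min_rate_pos:
  assumes r: "r \<in> allocations k" and pos: "0 < min_rate r" and l: "l \<in> {1..k}"
  shows "0 < r l"
proof (rule ccontr)
  assume "\<not> 0 < r l"
  with r l have rl: "r l = 0" unfolding allocations_def by force
  have nonneg: "0 \<le> r l'" if "l' \<in> {1..k}" for l' using r that by (auto simp: allocations_def)
  show False
  proof (cases "l \<le> m")
    case True
    then have "min_rate r \<le> g l (m+1) (r l) (r (m+1))" using l m_less by (intro min_rate_le) auto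
    also have "\<dots> = 0" using rl True l m_less nonneg[of "m+1"] by (auto intro: g_0_left)
    finally show False using pos by simp
  next
    case False
    then have "min_rate r \<le> g 1 l (r 1) (r l)" using l m_pos by (intro min_rate_le) auto
    also have "\<dots> = 0" using rl False l m_pos nonneg[of 1] by (auto intro: g_0_right)
    finally show False using pos by simp
  qed
qed

text \<open>Moving mass \<open>(1 - t) * r p\<close> from alternative \<open>p\<close> evenly to all others scales the pairs
  involving \<open>p\<close> by at least \<open>t\<close> and all other pairs by at least \<open>1 + d\<close>.\<close>
lemma exists_min_rate_gt:
  assumes r: "r \<in> allocations k" and pos: "\<And>l. l \<in> {1..k} \<Longrightarrow> 0 < r l"
    and p: "p \<in> {1..k}" and z: "0 < z"
    and ge: "\<And>i j. i \<in> {1..m} \<Longrightarrow> j \<in> {m+1..k} \<Longrightarrow> z \<le> g i j (r i) (r j)"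
    and gt: "\<And>i j. i \<in> {1..m} \<Longrightarrow> j \<in> {m+1..k} \<Longrightarrow> i = p \<or> j = p \<Longrightarrow> z < g i j (r i) (r j)"
  shows "\<exists>r'\<in>allocations k. z < min_rate r'"
proof -
  define F where "F = {(i, j). i \<in> {1..m} \<and> j \<in> {m+1..k} \<and> (i = p \<or> j = p)}"
  have "finite F" by (rule finite_subset[of _ "{1..m} \<times> {m+1..k}"]) (auto simp: F_def)
  then obtain t where t: "0 < t" "t < 1" and tF: "\<And>q. q \<in> F \<Longrightarrow> z < t * (case q of (i, j) \<Rightarrow> g i j (r i) (r j))"
    using exists_scale_below_1[where A=F and f="\<lambda>(i, j). g i j (r i) (r j)" and z=z] gt
    by (fastforce simp: F_def)
  define d where "d = (1 - t) * r p / (real k - 1)"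
  define r' where "r' l = (if l = p then t * r p else r l + d)" for l
  have k: "1 < real k" using m_pos m_less by linarith
  have d: "0 < d" "(real k - 1) * d = (1 - t) * r p" using t pos[OF p] k by (auto simp: d_def)
  have "(\<Sum>l=1..k. r' l) = (\<Sum>l=1..k. r l + d - (if l = p then (1 - t) * r p + d else 0))"
    by (intro sum.cong) (auto simp: r'_def algebra_simps)
  also have "\<dots> = 1"
    using r p d(2) by (simp add: sum.distrib sum_subtractf allocations_def algebra_simps)
  moreover have "0 < r' l" if "l \<in> {1..k}" for l using pos[OF that] t d(1) by (auto simp: r'_def)
  ultimately have "r' \<in> allocations k" by (auto simp: allocations_def less_imp_le)
  moreover have "z < min_rate r'"
    unfolding min_rate_gt_iff
  proof (intro ballI)
    fix i j
    assume i: "i \<in> {1..m}" and j: "j \<in> {m+1..k}"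
    have ij: "i \<in> {1..k}" "j \<in> {1..k}" using i j m_less by auto
    have r_pos: "0 < r i" "0 < r j" using pos ij by auto
    show "z < g i j (r' i) (r' j)"
    proof (cases "i = p \<or> j = p")
      case True
      have "t * r l \<le> r' l" if "0 < r l" for l
      proof -
        have "t * r l \<le> r l" using that t by (intro mult_left_le_one_le) auto
        then show ?thesis using d(1) by (auto simp: r'_def)
      qed
      then have "t * g i j (r i) (r j) \<le> g i j (r' i) (r' j)"
        using r_pos t by (intro g_scale[OF i j]) auto
      moreover have "z < t * g i j (r i) (r j)" using tF[of "(i, j)"] True i j by (simp add: F_def)
      ultimately show ?thesis by simp
    next
      case False
      have "(1 + d) * r l \<le> r' l" if "l \<in> {1..k}" "l \<noteq> p" for l
      proof -
        have "d * r l \<le> d" using allocation_le_1[OF r that(1)] d(1) by (simp add: mult_left_le)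
        then show ?thesis using that(2) by (simp add: r'_def algebra_simps)
      qed
      then have "(1 + d) * g i j (r i) (r j) \<le> g i j (r' i) (r' j)"
        using r_pos d(1) False ij by (intro g_scale[OF i j]) auto
      moreover have "z < (1 + d) * g i j (r i) (r j)"
      proof -
        have "z < (1 + d) * z" using z d(1) by simp
        also have "\<dots> \<le> (1 + d) * g i j (r i) (r j)" using ge[OF i j] d(1) by simp
        finally show ?thesis .
      qed
      ultimately show ?thesis by simp
    qed
  qed
  ultimately show ?thesis by blast
qed

lemma balancedD:
  assumes "balanced z r"
  shows "r \<in> allocations k" and "min_rate r = z"
proof -
  have rows: "\<And>i. i \<in> {1..m} \<Longrightarrow> Min ((\<lambda>j. g i j (r i) (r j)) ` {m+1..k}) = z"
    using assms by (auto simp: balanced_def)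
  show "r \<in> allocations k" using assms by (auto simp: balanced_def allocations_def less_imp_le)
  have "z \<le> min_rate r"
    unfolding min_rate_ge_iff
  proof (intro ballI)
    fix i j
    assume i: "i \<in> {1..m}" and j: "j \<in> {m+1..k}"
    have "Min ((\<lambda>j. g i j (r i) (r j)) ` {m+1..k}) \<le> g i j (r i) (r j)" using j by (intro Min_le) auto
    then show "z \<le> g i j (r i) (r j)" using rows[OF i] by simp
  qed
  moreover obtain j where "j \<in> {m+1..k}" "g 1 j (r 1) (r j) = z"
    using rows[of 1] Min_in[of "(\<lambda>j. g 1 j (r 1) (r j)) ` {m+1..k}"] m_pos m_less by auto
  then have "min_rate r \<le> z" using min_rate_le[of 1 j r] m_pos by auto
  ultimately show "min_rate r = z" by simp
qed

lemma maximiser_pos: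
  assumes r: "r \<in> allocations k" and max: "\<And>r'. r' \<in> allocations k \<Longrightarrow> min_rate r' \<le> min_rate r"
  shows "0 < min_rate r" and "\<And>l. l \<in> {1..k} \<Longrightarrow> 0 < r l"
proof -
  show "0 < min_rate r" using exists_min_rate_pos max by fastforce
  then show "\<And>l. l \<in> {1..k} \<Longrightarrow> 0 < r l" by (rule pos_of_min_rate_pos[OF r])
qed

lemma maximiser_tight_pair:
  assumes r: "r \<in> allocations k" and max: "\<And>r'. r' \<in> allocations k \<Longrightarrow> min_rate r' \<le> min_rate r"
    and p: "p \<in> {1..k}"
  shows "\<exists>i\<in>{1..m}. \<exists>j\<in>{m+1..k}. (i = p \<or> j = p) \<and> g i j (r i) (r j) = min_rate r"
proof (rule ccontr)
  assume no_tight: "\<not> ?thesis"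
  have "min_rate r < g i j (r i) (r j)"
    if "i \<in> {1..m}" "j \<in> {m+1..k}" "i = p \<or> j = p" for i j
  proof -
    have "g i j (r i) (r j) \<noteq> min_rate r" using no_tight that by blast
    then show ?thesis using min_rate_le[OF that(1,2), of r] by simp
  qed
  then have "\<exists>r'\<in>allocations k. min_rate r < min_rate r'"
    using min_rate_le
    by (intro exists_min_rate_gt[OF r maximiser_pos(2)[OF r max] p maximiser_pos(1)[OF r max]])
  then show False using max by (auto simp: not_less[symmetric])
qed

lemma maximiser_balanced:
  assumes r: "r \<in> allocations k" and max: "\<And>r'. r' \<in> allocations k \<Longrightarrow> min_rate r' \<le> min_rate r"
  shows "balanced (min_rate r) r"
proof -
  note tight = maximiser_tight_pair[OF r max]
  have "Min ((\<lambda>j. g i j (r i) (r j)) ` {m+1..k}) = min_rate r" if i: "i \<in> {1..m}" for i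
  proof (rule Min_eqI)
    obtain i' j where "i' \<in> {1..m}" "j \<in> {m+1..k}" "i' = i" "g i' j (r i') (r j) = min_rate r"
      using tight[of i] i m_less by fastforce
    then show "min_rate r \<in> (\<lambda>j. g i j (r i) (r j)) ` {m+1..k}" by force
  qed (use min_rate_le i in auto)
  moreover have "Min ((\<lambda>i. g i j (r i) (r j)) ` {1..m}) = min_rate r" if j: "j \<in> {m+1..k}" for j
  proof (rule Min_eqI)
    obtain i j' where "i \<in> {1..m}" "j' \<in> {m+1..k}" "j' = j" "g i j' (r i) (r j') = min_rate r"
      using tight[of j] j m_less by fastforce
    then show "min_rate r \<in> (\<lambda>i. g i j (r i) (r j)) ` {1..m}" by force
  qed (use min_rate_le j in auto)
  ultimately show ?thesis
    using r maximiser_pos(2)[OF r max] by (auto simp: balanced_def allocations_def)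
qed

theorem is_optimal_iff_balanced:
  "is_optimal (\<lambda>z r. r \<in> allocations k \<and> z \<le> min_rate r) r \<longleftrightarrow> is_optimal balanced r"
proof -
  obtain r0 where r0: "r0 \<in> allocations k" "\<And>r. r \<in> allocations k \<Longrightarrow> min_rate r \<le> min_rate r0"
    using exists_max_min_rate by blast
  have "is_optimal (\<lambda>z r. r \<in> allocations k \<and> z \<le> min_rate r) r \<longleftrightarrow>
      r \<in> allocations k \<and> min_rate r = min_rate r0"
  proof
    assume "is_optimal (\<lambda>z r. r \<in> allocations k \<and> z \<le> min_rate r) r"
    then obtain z where z: "r \<in> allocations k" "z \<le> min_rate r"
      and max: "\<And>z' r'. r' \<in> allocations k \<Longrightarrow> z' \<le> min_rate r' \<Longrightarrow> z' \<le> z"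
      unfolding is_optimal_def by blast
    have "min_rate r0 \<le> z" using max[OF r0(1) order.refl] .
    then show "r \<in> allocations k \<and> min_rate r = min_rate r0" using z r0(2)[OF z(1)] by simp
  next
    assume "r \<in> allocations k \<and> min_rate r = min_rate r0"
    then show "is_optimal (\<lambda>z r. r \<in> allocations k \<and> z \<le> min_rate r) r"
      unfolding is_optimal_def using r0(2) by (intro exI[of _ "min_rate r"]) force
  qed
  moreover have "is_optimal balanced r \<longleftrightarrow> r \<in> allocations k \<and> min_rate r = min_rate r0"
  proof
    assume "is_optimal balanced r"
    then obtain z where z: "balanced z r" "\<And>z' r'. balanced z' r' \<Longrightarrow> z' \<le> z"
      unfolding is_optimal_def by blast
    have "min_rate r0 \<le> z" using z(2) maximiser_balanced[OF r0] by blast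
    then show "r \<in> allocations k \<and> min_rate r = min_rate r0"
      using balancedD[OF z(1)] r0(2) by fastforce
  next
    assume r: "r \<in> allocations k \<and> min_rate r = min_rate r0"
    then have "balanced (min_rate r) r" using r0(2) by (intro maximiser_balanced) auto
    moreover have "z' \<le> min_rate r" if "balanced z' r'" for z' r'
      using balancedD[OF that] r0(2)[of r'] r by simp
    ultimately show "is_optimal balanced r" unfolding is_optimal_def by blast
  qed
  ultimately show ?thesis by simp
qed

end

section \<open>Ranked alternatives\<close>

lemma Min_image_ereal:
  assumes "finite S" "S \<noteq> {}"
  shows "Min ((\<lambda>x. ereal (f x)) ` S) = ereal (Min (f ` S))"
proof -
  have "(\<lambda>x. ereal (f x)) ` S = ereal ` f ` S" by auto
  then show ?thesis using mono_Min_commute[of ereal "f ` S"] assms by (simp add: mono_def)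
qed

locale ranked_alternatives = prob_space M
  for M :: "'a measure" +
  fixes X :: "nat \<Rightarrow> nat \<Rightarrow> 'a \<Rightarrow> real" and k m :: nat
  assumes m_ge_1: "1 \<le> m" and m_lt_k: "m < k"
    and rv: "\<And>l n. l \<in> {1..k} \<Longrightarrow> X l n \<in> borel_measurable M"
    and indep: "indep_vars (\<lambda>_. borel) (\<lambda>(l, n). X l n) ({1..k} \<times> UNIV)"
    and ident: "\<And>l n. l \<in> {1..k} \<Longrightarrow> distr M borel (X l n) = distr M borel (X l 0)"
    and means_decreasing: "\<And>l. l \<in> {1..<k} \<Longrightarrow> expectation (X l 0) > expectation (X (Suc l) 0)"
    and zero_in_interior_dom: "\<And>l. l \<in> {1..k} \<Longrightarrow> 0 \<in> interior (dom_Lambda M X l)"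
    and Lambda_differentiable: "\<And>l. l \<in> {1..k} \<Longrightarrow>
                    LambdaR M X l differentiable_on interior (dom_Lambda M X l)"
    and means_in_F: "{expectation (X k 0) .. expectation (X 1 0)} \<subseteq> (\<Inter>l\<in>{1..k}. interior (F_set M X l))"
begin

definition mean :: "nat \<Rightarrow> real" where
  "mean l = expectation (X l 0)"

lemma Lambda_eq: "l \<in> {1..k} \<Longrightarrow> Lambda M X l = log_mgf M (X l 0)"
  using Lambda_eq_log_mgf[OF indep _ rv ident] by blast

lemma mean_less:
  assumes "1 \<le> i" "i < j" "j \<le> k"
  shows "mean j < mean i"
proof -
  have "Suc i \<le> j" using assms by simp
  then show ?thesis using assms(3)
  proof (induction j rule: dec_induct)
    case base
    then show ?case using means_decreasing[of i] assms(1) by (simp add: mean_def)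
  next
    case (step n)
    then show ?case using means_decreasing[of n] assms(1) by (simp add: mean_def)
  qed
qed

lemma mean_bounds: "l \<in> {1..k} \<Longrightarrow> mean l \<in> {mean k..mean 1}"
  using mean_less[of l k] mean_less[of 1 l] by (cases "l = k"; cases "l = 1") auto

lemma cumulant_Lambda:
  assumes l: "l \<in> {1..k}"
  shows "cumulant (Lambda M X l) (mean l)"
proof
  have Lam: "Lambda M X l = log_mgf M (X l 0)" by (rule Lambda_eq[OF l])
  show "Lambda M X l 0 = 0" by (simp add: Lam log_mgf_zero)
  obtain e where e: "0 < e" "ball 0 e \<subseteq> dom_Lambda M X l"
    using zero_in_interior_dom[OF l] by (meson mem_interior)
  then have "e/2 \<in> dom_Lambda M X l" "-(e/2) \<in> dom_Lambda M X l" by (auto simp: subset_iff)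
  then have "integrable M (X l 0)"
    using e(1) by (intro integrable_of_log_mgf_finite[OF rv[OF l], of "e/2"]) (auto simp: dom_Lambda_def Lam)
  then show "ereal (t * mean l) \<le> Lambda M X l t" for t
    by (simp add: Lam mean_def log_mgf_ge_mean)
  have "LambdaR M X l differentiable (at 0 within interior (dom_Lambda M X l))"
    using Lambda_differentiable[OF l] zero_in_interior_dom[OF l] by (simp add: differentiable_on_def)
  then have "LambdaR M X l differentiable (at 0)"
    by (simp add: at_within_open[OF zero_in_interior_dom[OF l] open_interior])
  then show "(\<lambda>t. real_of_ereal (Lambda M X l t)) differentiable at 0"
    by (simp add: LambdaR_def[abs_def])
  show "0 \<in> interior {t. Lambda M X l t < \<infinity>}"
    using zero_in_interior_dom[OF l] by (simp add: dom_Lambda_def)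
qed

lemma rate_fun_eq: "l \<in> {1..k} \<Longrightarrow> rate_fun M X l = cumulant.rate (Lambda M X l)"
  by (simp add: fun_eq_iff rate_fun_def cumulant.rate_def[OF cumulant_Lambda])

lemma rate_fun_finite:
  assumes l: "l \<in> {1..k}" and x: "x \<in> {mean k..mean 1}"
  shows "rate_fun M X l x < \<infinity>"
proof -
  have Lam: "Lambda M X l = log_mgf M (X l 0)" by (rule Lambda_eq[OF l])
  have "x \<in> interior (F_set M X l)" using means_in_F x l by (auto simp: mean_def)
  then have "0 < prob {\<omega>\<in>space M. x \<le> X l 0 \<omega>}" "0 < prob {\<omega>\<in>space M. X l 0 \<omega> \<le> x}"
    using Lambda_differentiable[OF l]
    by (simp_all add: prob_tails_pos[OF rv[OF l]] F_set_def dom_Lambda_def LambdaR_def[abs_def] Lam)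
  then show ?thesis
    unfolding rate_fun_def Lam by (rule Legendre_log_mgf_finite[OF rv[OF l]])
qed

lemma rate_pair_Lambda:
  assumes i: "i \<in> {1..m}" and j: "j \<in> {m+1..k}"
  shows "rate_pair (Lambda M X i) (mean i) (Lambda M X j) (mean j)"
proof -
  have ik: "i \<in> {1..k}" and jk: "j \<in> {1..k}" using i j m_lt_k by auto
  show ?thesis
  proof (intro rate_pair.intro rate_pair_axioms.intro cumulant_Lambda[OF ik] cumulant_Lambda[OF jk])
    show "mean j < mean i" using i j by (intro mean_less) auto
    show "cumulant.rate (Lambda M X i) (mean j) < \<infinity>" "cumulant.rate (Lambda M X j) (mean i) < \<infinity>"
      using rate_fun_finite[OF ik mean_bounds[OF jk]] rate_fun_finite[OF jk mean_bounds[OF ik]]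
      by (simp_all add: rate_fun_eq[OF ik] rate_fun_eq[OF jk])
  qed
qed

definition G_real :: "nat \<Rightarrow> nat \<Rightarrow> real \<Rightarrow> real \<Rightarrow> real" where
  "G_real i j a b = real_of_ereal (G M X i j a b)"

lemma G_eq_pair_rate:
  assumes "i \<in> {1..m}" "j \<in> {m+1..k}" "0 \<le> a" "0 \<le> b"
  shows "G M X i j a b = ereal (rate_pair.pair_rate (Lambda M X i) (mean i) (Lambda M X j) (mean j) a b)"
  using assms m_lt_k rate_pair.INF_rates_eq_pair_rate[OF rate_pair_Lambda]
  by (simp add: G_def rate_fun_eq)

lemma G_eq_G_real:
  assumes "i \<in> {1..m}" "j \<in> {m+1..k}" "0 \<le> a" "0 \<le> b"
  shows "G M X i j a b = ereal (G_real i j a b)"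
  using G_eq_pair_rate[OF assms] by (simp add: G_real_def)

lemma G_real_eq_pair_rate:
  assumes "i \<in> {1..m}" "j \<in> {m+1..k}" "0 \<le> a" "0 \<le> b"
  shows "G_real i j a b = rate_pair.pair_rate (Lambda M X i) (mean i) (Lambda M X j) (mean j) a b"
  using G_eq_pair_rate[OF assms] by (simp add: G_real_def)

lemma allocation_G_real: "allocation k m G_real"
proof
  fix i j
  assume i: "i \<in> {1..m}" and j: "j \<in> {m+1..k}"
  interpret rate_pair "Lambda M X i" "mean i" "Lambda M X j" "mean j"
    by (rule rate_pair_Lambda[OF i j])
  note G_real = G_real_eq_pair_rate[OF i j]
  show "G_real i j 0 b = 0" if "0 \<le> b" for b
    using that by (simp add: G_real pair_rate_0_left)
  show "G_real i j a 0 = 0" if "0 \<le> a" for a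
    using that by (simp add: G_real pair_rate_0_right)
  show "0 < G_real i j a b" if "0 < a" "0 < b" for a b
    using that by (simp add: G_real pair_rate_pos)
  show "t * G_real i j a b \<le> G_real i j a' b'"
    if "0 \<le> t" "0 \<le> a" "0 \<le> b" "t * a \<le> a'" "t * b \<le> b'" for a b a' b' t
  proof -
    have "0 \<le> a'" "0 \<le> b'" using that by (meson mult_nonneg_nonneg order_trans)+
    then show ?thesis using that by (simp add: G_real pair_rate_scale)
  qed
  show "continuous_on ({0..} \<times> {0..}) (\<lambda>p. G_real i j (fst p) (snd p))"
    by (rule continuous_on_eq[OF continuous_on_pair_rate]) (auto simp: G_real)
qed (use m_ge_1 m_lt_k in auto)

end

sublocale ranked_alternatives \<subseteq> allocation k m G_real
  by (rule allocation_G_real)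

context ranked_alternatives
begin

lemma feasible_P1_eq: "feasible_P1 M X k m = (\<lambda>z r. r \<in> allocations k \<and> z \<le> min_rate r)"
proof (intro ext)
  fix z r
  show "feasible_P1 M X k m z r \<longleftrightarrow> r \<in> allocations k \<and> z \<le> min_rate r"
  proof (cases "\<forall>l\<in>{1..k}. 0 \<le> r l")
    case True
    then have "0 \<le> G M X i j (r i) (r j) - ereal z \<longleftrightarrow> z \<le> G_real i j (r i) (r j)"
      if "i \<in> {1..m}" "j \<in> {m+1..k}" for i j
      using that m_lt_k by (simp add: G_eq_G_real)
    then show ?thesis using True by (auto simp: feasible_P1_def allocations_def min_rate_ge_iff)
  qed (auto simp: feasible_P1_def allocations_def)
qed

lemma feasible_P2_eq: "feasible_P2 M X k m = balanced"
proof (intro ext)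
  fix z r
  show "feasible_P2 M X k m z r \<longleftrightarrow> balanced z r"
  proof (cases "\<forall>l\<in>{1..k}. 0 < r l")
    case True
    then have G: "G M X i j (r i) (r j) = ereal (G_real i j (r i) (r j))"
      if "i \<in> {1..m}" "j \<in> {m+1..k}" for i j
      using that m_lt_k True by (intro G_eq_G_real) (auto intro!: less_imp_le)
    have "Min ((\<lambda>j. G M X i j (r i) (r j)) ` {m+1..k}) = ereal (Min ((\<lambda>j. G_real i j (r i) (r j)) ` {m+1..k}))"
      if "i \<in> {1..m}" for i
      using that m_lt_k by (simp add: G image_cong[OF refl G] Min_image_ereal)
    moreover have "Min ((\<lambda>i. G M X i j (r i) (r j)) ` {1..m}) = ereal (Min ((\<lambda>i. G_real i j (r i) (r j)) ` {1..m}))"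
      if "j \<in> {m+1..k}" for j
      using that m_ge_1 by (simp add: G image_cong[OF refl G] Min_image_ereal)
    ultimately show ?thesis using True by (simp add: feasible_P2_def balanced_def)
  qed (auto simp: feasible_P2_def balanced_def)
qed

theorem optimal_P1_iff_optimal_P2: "optimal_P1 M X k m r \<longleftrightarrow> optimal_P2 M X k m r"
  unfolding optimal_P1_def optimal_P2_def is_optimal_def[symmetric]
  unfolding feasible_P1_eq feasible_P2_eq
  by (rule is_optimal_iff_balanced)

end

theorem lemma5:
  fixes M :: "'a measure" and X :: "nat \<Rightarrow> nat \<Rightarrow> 'a \<Rightarrow> real" and k m :: nat
  assumes k2: "k \<ge> 2" and m1: "1 \<le> m" and mk: "m < k"
    and prob: "prob_space M"
    and rv: "\<And>l n. l \<in> {1..k} \<Longrightarrow> X l n \<in> borel_measurable M"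
    and indep: "prob_space.indep_vars M (\<lambda>_. borel) (\<lambda>(l, n). X l n) ({1..k} \<times> UNIV)"
    and ident: "\<And>l n. l \<in> {1..k} \<Longrightarrow> distr M borel (X l n) = distr M borel (X l 0)"
    and ordered: "\<And>l. l \<in> {1..<k} \<Longrightarrow>
                    prob_space.expectation M (X l 0) > prob_space.expectation M (X (Suc l) 0)"
    and A1: "\<And>l lam. l \<in> {1..k} \<Longrightarrow> convergent (Lambda_seq M X l lam)"
    and A2: "\<And>l. l \<in> {1..k} \<Longrightarrow> 0 \<in> interior (dom_Lambda M X l)"
    and A3_diff: "\<And>l. l \<in> {1..k} \<Longrightarrow>
                    LambdaR M X l differentiable_on interior (dom_Lambda M X l)"
    and A3_sconv: "\<And>l. l \<in> {1..k} \<Longrightarrow>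
                    strictly_convex_on (interior (dom_Lambda M X l)) (LambdaR M X l)"
    and A3_cont: "\<And>l. l \<in> {1..k} \<Longrightarrow>
                    continuous_on (interior (dom_Lambda M X l)) (LambdaR M X l)"
    and A3_steep: "\<And>l. l \<in> {1..k} \<Longrightarrow> steep (dom_Lambda M X l) (LambdaR M X l)"
    and A4: "{prob_space.expectation M (X k 0) .. prob_space.expectation M (X 1 0)}
               \<subseteq> (\<Inter>l\<in>{1..k}. interior (F_set M X l))"
  shows "optimal_P1 M X k m r \<longleftrightarrow> optimal_P2 M X k m r"
proof -
  interpret ranked_alternatives M X k m
  proof (intro ranked_alternatives.intro ranked_alternatives_axioms.intro)
    show "prob_space M" by (rule prob)
  qed (fact m1 mk rv indep ident ordered A2 A3_diff A4)+
  show ?thesis by (rule optimal_P1_iff_optimal_P2)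
qed

end
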